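(* For integers $n>p\ge 1$, the number of $123$-avoiding ordered partitions of $[n]$ into $n-p+1$ blocks, of which exactly one block has size $p$ and the other $n-p$ blocks have size $1$, is $$\frac{(n-p+1)(p+1)\binom{2n-p}{n-p}}{n+1}.$$
   Context: An ordered set partition of $[n]$ into $k$ blocks is a sequence $B_1/B_2/\cdots/B_k$ of nonempty, pairwise disjoint subsets of $[n]$ whose union is $[n]$; the order of the blocks matters, but not the order of elements within a block. Such a partition contains the pattern $123$ if there are block indices $i_1<i_2<i_3$ and elements $b_j\in B_{i_j}$ with $b_1<b_2<b_3$; otherwise it avoids $123$. *)

theory Defs
  imports Complex_Main
begin

definition ordered_set_partition :: "nat \<Rightarrow> nat set list \<Rightarrow> bool" where
  "ordered_set_partition n Bs \<longleftrightarrow>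
     (\<forall>i < length Bs. Bs ! i \<noteq> {}) \<and>
     (\<forall>i < length Bs. \<forall>j < length Bs. i \<noteq> j \<longrightarrow> Bs ! i \<inter> Bs ! j = {}) \<and>
     \<Union> (set Bs) = {1..n}"

definition contains_123 :: "nat set list \<Rightarrow> bool" where
  "contains_123 Bs \<longleftrightarrow>
     (\<exists>i1 i2 i3 b1 b2 b3. i1 < i2 \<and> i2 < i3 \<and> i3 < length Bs \<and>
        b1 \<in> Bs ! i1 \<and> b2 \<in> Bs ! i2 \<and> b3 \<in> Bs ! i3 \<and> b1 < b2 \<and> b2 < b3)"

definition avoids_123 :: "nat set list \<Rightarrow> bool" where
  "avoids_123 Bs \<longleftrightarrow> \<not> contains_123 Bs"

end

(*
  Listing the large block in decreasing order turns such a partition into a permutation of [n]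
  whose entries at positions j+1, ..., j+p decrease, where j+1 is the position of the block; this
  preserves 123-avoidance and, for each of the n-p+1 positions, is a bijection. So it remains to
  count 123-avoiding permutations with a decreasing window of length p at a fixed position.
  Reading such a permutation from the left, the entries already read only matter through one
  threshold (one more than the smallest of them): no later 12 may start at or above it. Counting
  permutations of an N-set by the rank of their first entry then gives a ballot-type recurrence,
  solved by C(2N-p-c, N-c) - C(2N-p-c, N+1), with c the number of entries at or above the
  threshold. This does not depend on the position of the window, and for c = 0, N = n it equals
  (p+1)/(n+1) * C(2n-p, n-p).
*)

theory Submission
  imports Defs "HOL-Library.Disjoint_Sets"
begin

section \<open>Patterns in lists of blocks\<close>

abbreviation singletons :: "nat list \<Rightarrow> nat set list" where
  "singletons xs \<equiv> map (\<lambda>x. {x}) xs"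

definition has_12_from :: "nat set list \<Rightarrow> nat \<Rightarrow> bool" where
  "has_12_from Bs lo \<longleftrightarrow>
     (\<exists>i k b1 b2. i < k \<and> k < length Bs \<and> b1 \<in> Bs ! i \<and> b2 \<in> Bs ! k \<and> lo \<le> b1 \<and> b1 < b2)"

lemma contains_123I:
  "\<lbrakk>i < j; j < k; k < length Bs; x \<in> Bs ! i; y \<in> Bs ! j; z \<in> Bs ! k; x < y; y < z\<rbrakk>
   \<Longrightarrow> contains_123 Bs"
  unfolding contains_123_def by blast

lemma has_12_fromI:
  "\<lbrakk>i < k; k < length Bs; x \<in> Bs ! i; y \<in> Bs ! k; lo \<le> x; x < y\<rbrakk> \<Longrightarrow> has_12_from Bs lo"
  unfolding has_12_from_def by blast

lemma contains_123_Cons: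
  "contains_123 (B # Bs) \<longleftrightarrow> contains_123 Bs \<or> (\<exists>b\<in>B. has_12_from Bs (Suc b))"
proof
  assume "contains_123 (B # Bs)"
  then obtain i1 i2 i3 b1 b2 b3 where h: "i1 < i2" "i2 < i3" "i3 < Suc (length Bs)"
    "b1 \<in> (B # Bs) ! i1" "b2 \<in> (B # Bs) ! i2" "b3 \<in> (B # Bs) ! i3" "b1 < b2" "b2 < b3"
    unfolding contains_123_def by auto
  then obtain i2' i3' where i: "i2 = Suc i2'" "i3 = Suc i3'"
    by (metis gr0_implies_Suc le0 le_less_trans)
  show "contains_123 Bs \<or> (\<exists>b\<in>B. has_12_from Bs (Suc b))"
  proof (cases i1)
    case 0
    then have "has_12_from Bs (Suc b1)"
      using h i by (intro has_12_fromI[where i = i2' and k = i3' and x = b2 and y = b3]) auto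
    then show ?thesis using h 0 by auto
  next
    case (Suc i1')
    then have "contains_123 Bs"
      using h i
      by (intro contains_123I[where i = i1' and j = i2' and k = i3'
            and x = b1 and y = b2 and z = b3]) auto
    then show ?thesis ..
  qed
next
  assume "contains_123 Bs \<or> (\<exists>b\<in>B. has_12_from Bs (Suc b))"
  then show "contains_123 (B # Bs)"
  proof
    assume "contains_123 Bs"
    then obtain i1 i2 i3 b1 b2 b3 where "i1 < i2" "i2 < i3" "i3 < length Bs"
      "b1 \<in> Bs ! i1" "b2 \<in> Bs ! i2" "b3 \<in> Bs ! i3" "b1 < b2" "b2 < b3"
      unfolding contains_123_def by blast
    then show ?thesis
      by (intro contains_123I[where i = "Suc i1" and j = "Suc i2" and k = "Suc i3"
            and x = b1 and y = b2 and z = b3]) auto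
  next
    assume "\<exists>b\<in>B. has_12_from Bs (Suc b)"
    then obtain b i k b1 b2 where "b \<in> B" "i < k" "k < length Bs" "b1 \<in> Bs ! i" "b2 \<in> Bs ! k"
      "Suc b \<le> b1" "b1 < b2"
      unfolding has_12_from_def by blast
    then show ?thesis
      by (intro contains_123I[where i = 0 and j = "Suc i" and k = "Suc k"
            and x = b and y = b1 and z = b2]) auto
  qed
qed

lemma has_12_from_Cons:
  "has_12_from (B # Bs) lo \<longleftrightarrow> has_12_from Bs lo \<or> (\<exists>b\<in>B. lo \<le> b \<and> (\<exists>b'\<in>\<Union>(set Bs). b < b'))"
proof
  assume "has_12_from (B # Bs) lo"
  then obtain i k b1 b2 where h: "i < k" "k < Suc (length Bs)" "b1 \<in> (B # Bs) ! i"
    "b2 \<in> (B # Bs) ! k" "lo \<le> b1" "b1 < b2"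
    unfolding has_12_from_def by auto
  then obtain k' where k: "k = Suc k'" by (metis gr0_implies_Suc le0 le_less_trans)
  show "has_12_from Bs lo \<or> (\<exists>b\<in>B. lo \<le> b \<and> (\<exists>b'\<in>\<Union>(set Bs). b < b'))"
  proof (cases i)
    case 0
    have "b2 \<in> \<Union>(set Bs)" using h k by auto
    then show ?thesis using h 0 by auto
  next
    case (Suc i')
    then have "has_12_from Bs lo"
      using h k by (intro has_12_fromI[where i = i' and k = k' and x = b1 and y = b2]) auto
    then show ?thesis ..
  qed
next
  assume "has_12_from Bs lo \<or> (\<exists>b\<in>B. lo \<le> b \<and> (\<exists>b'\<in>\<Union>(set Bs). b < b'))"
  then show "has_12_from (B # Bs) lo"
  proof
    assume "has_12_from Bs lo"
    then obtain i k b1 b2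
      where "i < k" "k < length Bs" "b1 \<in> Bs ! i" "b2 \<in> Bs ! k" "lo \<le> b1" "b1 < b2"
      unfolding has_12_from_def by blast
    then show ?thesis
      by (intro has_12_fromI[where i = "Suc i" and k = "Suc k" and x = b1 and y = b2]) auto
  next
    assume "\<exists>b\<in>B. lo \<le> b \<and> (\<exists>b'\<in>\<Union>(set Bs). b < b')"
    then obtain b b' k where "b \<in> B" "lo \<le> b" "k < length Bs" "b' \<in> Bs ! k" "b < b'"
      by (auto simp: in_set_conv_nth)
    then show ?thesis by (intro has_12_fromI[where i = 0 and k = "Suc k" and x = b and y = b']) auto
  qed
qed

lemma has_12_from_antimono: "lo \<le> lo' \<Longrightarrow> has_12_from Bs lo' \<Longrightarrow> has_12_from Bs lo"
  unfolding has_12_from_def by (meson order_trans)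

lemma has_12_from_min: "has_12_from Bs (min a b) \<longleftrightarrow> has_12_from Bs a \<or> has_12_from Bs b"
  by (metis has_12_from_antimono min.cobounded1 min.cobounded2 min_def)

lemma not_has_12_from_above:
  assumes "\<forall>b\<in>\<Union>(set Bs). b \<le> n"
  shows "\<not> has_12_from Bs (Suc n)"
  using assms unfolding has_12_from_def by (fastforce simp: in_set_conv_nth)

text \<open>For a prefix already read, \<open>t\<close> is one more than its smallest entry: a later 12 starting
  at or above \<open>t\<close> would complete a 123.\<close>
definition avoids_123_12_from :: "nat set list \<Rightarrow> nat \<Rightarrow> bool" where
  "avoids_123_12_from Bs t \<longleftrightarrow> \<not> contains_123 Bs \<and> \<not> has_12_from Bs t"

lemma avoids_123_12_from_Nil: "avoids_123_12_from [] t"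
  unfolding avoids_123_12_from_def contains_123_def has_12_from_def by simp

lemma avoids_123_12_from_singleton_Cons:
  "avoids_123_12_from ({x} # Bs) t \<longleftrightarrow>
     avoids_123_12_from Bs (min t (Suc x)) \<and> (t \<le> x \<longrightarrow> (\<forall>b\<in>\<Union>(set Bs). b \<le> x))"
proof -
  have "(\<exists>b\<in>\<Union>(set Bs). x < b) \<longleftrightarrow> \<not> (\<forall>b\<in>\<Union>(set Bs). b \<le> x)"
    by (auto simp: not_le)
  then show ?thesis
    unfolding avoids_123_12_from_def contains_123_Cons has_12_from_Cons has_12_from_min by auto
qed

lemma avoids_123_12_from_insert_max:
  assumes "\<forall>s\<in>S. s < x" "S \<noteq> {}"
  shows "avoids_123_12_from (insert x S # Bs) t \<longleftrightarrow> avoids_123_12_from ({x} # S # Bs) t"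
proof -
  obtain s where s: "s \<in> S" using assms by auto
  have "has_12_from Bs (Suc x) \<Longrightarrow> has_12_from Bs (Suc s)"
    using has_12_from_antimono[of "Suc s" "Suc x"] assms s by auto
  moreover have "has_12_from (S # Bs) (Suc x) \<longleftrightarrow> has_12_from Bs (Suc x)"
    unfolding has_12_from_Cons using assms by auto
  ultimately have "contains_123 (insert x S # Bs) \<longleftrightarrow> contains_123 ({x} # S # Bs)"
    unfolding contains_123_Cons using s by auto
  moreover have "has_12_from (insert x S # Bs) t \<longleftrightarrow> has_12_from ({x} # S # Bs) t"
    unfolding has_12_from_Cons using assms by auto
  ultimately show ?thesis unfolding avoids_123_12_from_def by simp
qed

lemma avoids_123_12_from_decreasing_block:
  assumes "sorted_wrt (>) ds" "ds \<noteq> []"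
  shows "avoids_123_12_from (set ds # Bs) t \<longleftrightarrow> avoids_123_12_from (singletons ds @ Bs) t"
  using assms
proof (induction ds arbitrary: t)
  case Nil
  then show ?case by simp
next
  case (Cons x ds)
  show ?case
  proof (cases "ds = []")
    case True
    then show ?thesis by simp
  next
    case False
    have "avoids_123_12_from (set (x # ds) # Bs) t \<longleftrightarrow> avoids_123_12_from ({x} # set ds # Bs) t"
      using avoids_123_12_from_insert_max[of "set ds" x] Cons.prems False by simp
    also have "\<dots> \<longleftrightarrow> avoids_123_12_from ({x} # singletons ds @ Bs) t"
      unfolding avoids_123_12_from_singleton_Cons using Cons.IH Cons.prems False by auto
    finally show ?thesis by simp
  qed
qed

lemma avoids_123_12_from_singletons_append_cong:
  assumes "\<And>t. avoids_123_12_from X t \<longleftrightarrow> avoids_123_12_from Y t" "\<Union>(set X) = \<Union>(set Y)"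
  shows "avoids_123_12_from (singletons L @ X) t \<longleftrightarrow> avoids_123_12_from (singletons L @ Y) t"
proof (induction L arbitrary: t)
  case Nil
  then show ?case using assms by simp
next
  case (Cons a L)
  then show ?case using assms(2) by (simp add: avoids_123_12_from_singleton_Cons)
qed

lemma avoids_123_12_from_block_iff_singletons:
  assumes "sorted_wrt (>) ds" "ds \<noteq> []"
  shows "avoids_123_12_from (singletons L @ set ds # singletons R) t \<longleftrightarrow>
         avoids_123_12_from (singletons (L @ ds @ R)) t"
proof -
  have "avoids_123_12_from (singletons L @ set ds # singletons R) t \<longleftrightarrow>
        avoids_123_12_from (singletons L @ singletons ds @ singletons R) t"
    by (rule avoids_123_12_from_singletons_append_cong)
      (use avoids_123_12_from_decreasing_block[OF assms] in auto)
  then show ?thesis by simp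
qed

section \<open>Ballot numbers\<close>

definition ballot :: "nat \<Rightarrow> nat \<Rightarrow> nat \<Rightarrow> int" where
  "ballot N c p = int ((2*N - p - c) choose (N - c)) - int ((2*N - p - c) choose (N + 1))"

lemma ballot_diag: "p \<le> N \<Longrightarrow> ballot N N p = 1"
  unfolding ballot_def by simp

lemma ballot_Suc_Suc:
  assumes "c < N" "p \<le> N"
  shows "ballot (Suc N) (Suc c) p = ballot N c p + ballot (Suc N) (Suc (Suc c)) p"
proof -
  obtain k where k: "N - c = Suc k" using assms by (metis Suc_diff_Suc)
  have "2 * Suc N - p - Suc c = Suc (2*N - p - c)" "2 * Suc N - p - Suc (Suc c) = 2*N - p - c"
    "Suc N - Suc c = Suc k" "Suc N - Suc (Suc c) = k"
    using assms k by auto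
  then show ?thesis unfolding ballot_def k by (simp add: numeral_2_eq_2)
qed

lemma ballot_Suc_window:
  assumes "c \<le> M" "Suc (Suc p) \<le> Suc M"
  shows "ballot (Suc M) c (Suc p) = ballot (Suc M) c (Suc (Suc p)) + ballot M c p"
proof -
  obtain k where k: "Suc M - c = Suc k" using assms by (metis Suc_diff_le)
  define T where "T = 2 * Suc M - Suc (Suc p) - c"
  have "2 * Suc M - Suc p - c = Suc T" "2 * M - p - c = T" "M - c = k"
    using assms k unfolding T_def by auto
  then show ?thesis unfolding ballot_def k T_def[symmetric] by simp
qed

lemma sum_ballot:
  assumes "c \<le> N" "p \<le> N"
  shows "(\<Sum>r\<in>{c..N}. ballot N r p) = ballot (Suc N) (Suc c) p"
  using assms
proof (induction "N - c" arbitrary: c)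
  case 0
  then show ?case by (simp add: ballot_diag)
next
  case (Suc d)
  then have "c < N" by simp
  then have "{c..N} = insert c {Suc c..N}" by auto
  then show ?case using Suc ballot_Suc_Suc[OF \<open>c < N\<close> \<open>p \<le> N\<close>] by simp
qed

lemma ballot_0_eq_1:
  assumes "1 \<le> N" "p \<le> N"
  shows "ballot N 0 p = ballot N 1 p"
proof -
  obtain k where k: "N = Suc k" using assms by (cases N) auto
  define T where "T = 2*N - p - 1"
  have "2*N - p = Suc T" "2*N - p - 1 = T" using assms unfolding T_def by auto
  then show ?thesis unfolding ballot_def k by simp
qed

lemma ballot_window_0_eq_1:
  assumes "c \<le> N"
  shows "ballot N c 0 = ballot N c 1"
proof (cases "c = N")
  case True
  then show ?thesis by (simp add: ballot_def binomial_eq_0)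
next
  case False
  define T k where "T = 2*N - 1 - c" and "k = N - c - 1"
  have T: "2*N - c = Suc T" "2*N - Suc c = T" and k: "N - c = Suc k" "T - k = N"
    using assms False unfolding T_def k_def by auto
  then have "T choose k = T choose N" using binomial_symmetric[of k T] by simp
  then show ?thesis unfolding ballot_def using T k by simp
qed

lemma sum_lessThan_Suc_zero_or_ge:
  "(\<Sum>r<Suc M. if r = 0 then a else if c \<le> r then h r else 0) = a + (\<Sum>r\<in>{max c 1..M}. h r)"
proof -
  have "(\<Sum>r<Suc M. if r = 0 then a else if c \<le> r then h r else 0) =
        a + (\<Sum>i<M. if c \<le> Suc i then h (Suc i) else 0)"
    by (simp only: sum.lessThan_Suc_shift) simp
  also have "(\<Sum>i<M. if c \<le> Suc i then h (Suc i) else 0) =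
        (\<Sum>r\<in>{Suc 0..<Suc M}. if c \<le> r then h r else 0)"
    by (simp only: lessThan_atLeast0 sum.shift_bounds_Suc_ivl)
  also have "\<dots> = (\<Sum>r\<in>{r \<in> {Suc 0..<Suc M}. c \<le> r}. h r)"
    by (rule sum.inter_filter[symmetric]) simp
  also have "{r \<in> {Suc 0..<Suc M}. c \<le> r} = {max c 1..M}"
    by auto
  finally show ?thesis .
qed

text \<open>The recurrence obtained by classifying permutations by the number \<open>r\<close> of entries
  above their first entry.\<close>
lemma ballot_first_step:
  assumes "c \<le> Suc M" "p \<le> M"
  shows "ballot M (c - 1) p + (\<Sum>r\<in>{max c 1..M}. ballot M r p) = ballot (Suc M) c p"
proof -
  have step: "ballot M (c - 1) p + (\<Sum>r\<in>{c..M}. ballot M r p) = ballot (Suc M) c p"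
    if c_bounds: "1 \<le> c" "c \<le> Suc M" for c
  proof (cases "c = Suc M")
    case True
    then show ?thesis using assms by (simp add: ballot_diag)
  next
    case False
    then obtain c' where c': "c = Suc c'" "c' < M" using c_bounds False by (cases c) auto
    then show ?thesis using sum_ballot[of c M p] ballot_Suc_Suc[of c' M p] assms by simp
  qed
  show ?thesis
  proof (cases "c = 0")
    case True
    then show ?thesis using step[of 1] ballot_0_eq_1[of "Suc M" p] assms by simp
  next
    case False
    then have "max c 1 = c" by simp
    then show ?thesis using step[of c] False assms by simp
  qed
qed

lemma ballot_first_step_window:
  assumes "c \<le> Suc (Suc K)" "q \<le> K"
  shows "ballot (Suc K) (c - 1) (Suc q) +
           (\<Sum>r\<in>{max c 1..Suc K}. ballot (Suc K) r (Suc q) - ballot K (r - 1) q)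
         = ballot (Suc (Suc K)) c (Suc (Suc q))"
proof -
  define c1 where "c1 = max c 1"
  have "(\<Sum>r\<in>{c1..Suc K}. ballot K (r - 1) q) = (\<Sum>r\<in>{c1 - 1..K}. ballot K r q)"
  proof -
    have "{c1..Suc K} = {Suc (c1 - 1)..Suc K}" unfolding c1_def by simp
    then show ?thesis by (simp only: sum.shift_bounds_cl_Suc_ivl diff_Suc_1)
  qed
  also have "\<dots> = (if c1 = Suc (Suc K) then 0 else ballot (Suc K) c1 q)"
    using sum_ballot[of "c1 - 1" K q] assms unfolding c1_def by auto
  finally have sub: "(\<Sum>r\<in>{c1..Suc K}. ballot K (r - 1) q) =
      (if c1 = Suc (Suc K) then 0 else ballot (Suc K) c1 q)" .
  have c1_eq: "ballot (Suc (Suc K)) c1 p' = ballot (Suc (Suc K)) c p'" if "p' \<le> Suc (Suc K)" for p'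
    using ballot_0_eq_1[of "Suc (Suc K)" p'] that unfolding c1_def by (cases "c = 0") auto
  have "ballot (Suc K) (c - 1) (Suc q) + (\<Sum>r\<in>{c1..Suc K}. ballot (Suc K) r (Suc q))
      = ballot (Suc (Suc K)) c (Suc q)"
    using ballot_first_step[of c "Suc K" "Suc q"] assms unfolding c1_def by simp
  moreover have "ballot (Suc (Suc K)) c (Suc q) -
      (if c1 = Suc (Suc K) then 0 else ballot (Suc K) c1 q) = ballot (Suc (Suc K)) c (Suc (Suc q))"
  proof (cases "c1 = Suc (Suc K)")
    case True
    then show ?thesis using c1_eq assms by (simp add: ballot_diag)
  next
    case False
    then have "c1 \<le> Suc K" using assms unfolding c1_def by auto
    then show ?thesis using ballot_Suc_window[of c1 "Suc K" q] c1_eq assms by simp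
  qed
  ultimately show ?thesis using sub unfolding c1_def by (simp add: sum_subtractf)
qed

section \<open>Permutations with a decreasing window\<close>

definition windowed_perms :: "nat set \<Rightarrow> nat \<Rightarrow> nat \<Rightarrow> nat \<Rightarrow> nat list set" where
  "windowed_perms A j p t = {\<tau>. distinct \<tau> \<and> set \<tau> = A \<and> avoids_123_12_from (singletons \<tau>) t \<and>
                                sorted_wrt (>) (take p (drop j \<tau>))}"

definition num_above :: "nat set \<Rightarrow> nat \<Rightarrow> nat" where
  "num_above A x = card {a\<in>A. x < a}"

definition num_atleast :: "nat set \<Rightarrow> nat \<Rightarrow> nat" where
  "num_atleast A t = card {a\<in>A. t \<le> a}"

lemma finite_windowed_perms: "finite A \<Longrightarrow> finite (windowed_perms A j p t)"
  unfolding windowed_perms_def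
  by (rule finite_subset[OF _ finite_subset_distinct[of A]]) auto

lemma length_windowed_perms: "\<tau> \<in> windowed_perms A j p t \<Longrightarrow> length \<tau> = card A"
  unfolding windowed_perms_def by (auto dest: distinct_card)

lemma card_Cons_vimage_eq_hd:
  assumes "[] \<notin> S"
  shows "card (Cons x -` S) = card {\<tau>\<in>S. hd \<tau> = x}"
proof -
  have "{\<tau>\<in>S. hd \<tau> = x} = Cons x ` (Cons x -` S)"
  proof (intro equalityI subsetI)
    fix \<tau> assume "\<tau> \<in> {\<tau>\<in>S. hd \<tau> = x}"
    then show "\<tau> \<in> Cons x ` (Cons x -` S)"
      using assms by (cases \<tau>) auto
  qed auto
  moreover have "inj_on (Cons x) (Cons x -` S)" by simp
  ultimately show ?thesis using card_image by metis
qed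

lemma card_by_head:
  assumes "finite A" "finite S" "\<forall>\<tau>\<in>S. \<tau> \<noteq> [] \<and> hd \<tau> \<in> A"
  shows "card S = (\<Sum>x\<in>A. card (Cons x -` S))"
proof -
  have "S = (\<Union>x\<in>A. {\<tau>\<in>S. hd \<tau> = x})" using assms(3) by auto
  moreover have "card (\<Union>x\<in>A. {\<tau>\<in>S. hd \<tau> = x}) = (\<Sum>x\<in>A. card {\<tau>\<in>S. hd \<tau> = x})"
    using assms(1,2) by (intro card_UN_disjoint) auto
  ultimately have "card S = (\<Sum>x\<in>A. card {\<tau>\<in>S. hd \<tau> = x})" by simp
  also have "\<dots> = (\<Sum>x\<in>A. card (Cons x -` S))"
    using assms(3) card_Cons_vimage_eq_hd[of S] by fastforce
  finally show ?thesis .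
qed

lemma num_above_less_card: "finite A \<Longrightarrow> x \<in> A \<Longrightarrow> num_above A x < card A"
  unfolding num_above_def by (rule psubset_card_mono) auto

lemma num_above_strict_antimono:
  assumes "finite A" "y \<in> A" "x < y"
  shows "num_above A y < num_above A x"
  unfolding num_above_def using assms by (intro psubset_card_mono) auto

lemma sum_num_above:
  assumes "finite A"
  shows "(\<Sum>x\<in>A. f (num_above A x)) = (\<Sum>r<card A. f r)"
proof -
  have inj: "inj_on (num_above A) A"
  proof (rule inj_onI)
    fix x y assume "x \<in> A" "y \<in> A" "num_above A x = num_above A y"
    then show "x = y"
      using num_above_strict_antimono[OF assms] by (metis less_irrefl linorder_neqE_nat)
  qed
  have "num_above A ` A = {..<card A}"
  proof (rule card_subset_eq)
    show "num_above A ` A \<subseteq> {..<card A}" using num_above_less_card[OF assms] by auto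
    show "card (num_above A ` A) = card {..<card A}" using card_image[OF inj] by simp
  qed simp
  then show ?thesis using sum.reindex[OF inj, of f] by simp
qed

lemma num_above_eq_0_iff: "finite A \<Longrightarrow> num_above A x = 0 \<longleftrightarrow> (\<forall>b\<in>A. b \<le> x)"
  unfolding num_above_def by (auto simp: not_less)

lemma num_atleast_le_card: "finite A \<Longrightarrow> num_atleast A t \<le> card A"
  unfolding num_atleast_def by (intro card_mono) auto

lemma head_condition_iff:
  assumes "finite A" "x \<in> A"
  shows "(t \<le> x \<longrightarrow> num_above A x = 0) \<longleftrightarrow> num_above A x = 0 \<or> num_atleast A t \<le> num_above A x"
proof (cases "t \<le> x")
  case True
  then have "{a\<in>A. x < a} \<subset> {a\<in>A. t \<le> a}" using assms(2) by auto
  then have "num_above A x < num_atleast A t"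
    unfolding num_above_def num_atleast_def using assms(1) by (intro psubset_card_mono) auto
  then show ?thesis using True by auto
next
  case False
  then have "{a\<in>A. t \<le> a} \<subseteq> {a\<in>A. x < a}" by auto
  then have "num_atleast A t \<le> num_above A x"
    unfolding num_above_def num_atleast_def using assms(1) by (intro card_mono) auto
  then show ?thesis using False by auto
qed

lemma num_atleast_Diff_min:
  assumes "finite A" "x \<in> A" "t \<le> x \<longrightarrow> num_above A x = 0"
  shows "num_atleast (A - {x}) (min t (Suc x)) =
           (if num_above A x = 0 then num_atleast A t - 1 else num_above A x)"
proof (cases "num_above A x = 0")
  case True
  then have le: "\<forall>b\<in>A. b \<le> x" using num_above_eq_0_iff assms(1) by blast
  have eq: "{a\<in>A - {x}. min t (Suc x) \<le> a} = {a\<in>A. t \<le> a} - {x}"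
  proof (intro equalityI subsetI)
    fix a assume "a \<in> {a\<in>A - {x}. min t (Suc x) \<le> a}"
    then show "a \<in> {a\<in>A. t \<le> a} - {x}" using le by (auto simp: min_def split: if_splits)
  qed auto
  show ?thesis
  proof (cases "t \<le> x")
    case True
    then have "x \<in> {a\<in>A. t \<le> a}" using assms(2) by simp
    then show ?thesis unfolding num_atleast_def eq using \<open>num_above A x = 0\<close> assms(1) by simp
  next
    case False
    then have none: "{a\<in>A. t \<le> a} = {}" using le by force
    show ?thesis unfolding num_atleast_def eq none using \<open>num_above A x = 0\<close> by simp
  qed
next
  case False
  then have "min t (Suc x) = Suc x" using assms(3) by simp
  moreover have "{a\<in>A - {x}. Suc x \<le> a} = {a\<in>A. x < a}" by auto
  ultimately have "num_atleast (A - {x}) (min t (Suc x)) = num_above A x"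
    unfolding num_atleast_def num_above_def by (simp only:)
  then show ?thesis using False by simp
qed

lemma num_atleast_Diff_Max:
  assumes "finite A" "A \<noteq> {}" "t \<le> Max A"
  shows "num_atleast (A - {Max A}) t = num_atleast A t - 1"
proof -
  have "{a\<in>A - {Max A}. t \<le> a} = {a\<in>A. t \<le> a} - {Max A}" by blast
  moreover have "Max A \<in> {a\<in>A. t \<le> a}" using Max_in[OF assms(1,2)] assms(3) by simp
  ultimately show ?thesis unfolding num_atleast_def using assms(1) by simp
qed

lemma Cons_mem_windowed_perms:
  assumes "finite A" "x \<in> A"
  shows "x # \<tau> \<in> windowed_perms A j p t \<longleftrightarrow>
           distinct \<tau> \<and> set \<tau> = A - {x} \<and> avoids_123_12_from (singletons \<tau>) (min t (Suc x)) \<and>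
           (t \<le> x \<longrightarrow> num_above A x = 0) \<and> sorted_wrt (>) (take p (drop j (x # \<tau>)))"
proof -
  have perm: "distinct (x # \<tau>) \<and> set (x # \<tau>) = A \<longleftrightarrow> distinct \<tau> \<and> set \<tau> = A - {x}"
    using assms(2) by auto
  have "\<Union>(set (singletons \<tau>)) = set \<tau>" by auto
  then have mem: "x # \<tau> \<in> windowed_perms A j p t \<longleftrightarrow>
      (distinct \<tau> \<and> set \<tau> = A - {x}) \<and> avoids_123_12_from (singletons \<tau>) (min t (Suc x)) \<and>
      (t \<le> x \<longrightarrow> (\<forall>b\<in>set \<tau>. b \<le> x)) \<and> sorted_wrt (>) (take p (drop j (x # \<tau>)))"
    unfolding windowed_perms_def mem_Collect_eq list.map(2) avoids_123_12_from_singleton_Cons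
      perm[symmetric]
    by (simp only: conj_assoc)
  show ?thesis
  proof (cases "distinct \<tau> \<and> set \<tau> = A - {x}")
    case True
    then have "(\<forall>b\<in>set \<tau>. b \<le> x) \<longleftrightarrow> num_above A x = 0"
      using num_above_eq_0_iff[OF assms(1)] assms(2) by auto
    then show ?thesis using mem True by simp
  next
    case False
    then show ?thesis using mem by blast
  qed
qed

lemma vimage_Cons_windowed_perms_shift:
  assumes "finite A" "x \<in> A" "0 < j \<or> p = 0"
  shows "Cons x -` windowed_perms A j p t =
           (if t \<le> x \<longrightarrow> num_above A x = 0
            then windowed_perms (A - {x}) (j - 1) p (min t (Suc x)) else {})"
proof -
  have "take p (drop j (x # \<tau>)) = take p (drop (j - 1) \<tau>)" for \<tau>
    using assms(3) by (cases j) auto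
  then show ?thesis
    unfolding vimage_def Cons_mem_windowed_perms[OF assms(1,2)] by (auto simp: windowed_perms_def)
qed

lemma vimage_Cons_windowed_perms_head:
  assumes "finite A" "x \<in> A"
  shows "Cons x -` windowed_perms A 0 (Suc q) t =
           (if t \<le> x \<longrightarrow> num_above A x = 0
            then {\<tau>\<in>windowed_perms (A - {x}) 0 q (min t (Suc x)). \<forall>y\<in>set (take q \<tau>). y < x}
            else {})"
  unfolding vimage_def Cons_mem_windowed_perms[OF assms] by (auto simp: windowed_perms_def)

text \<open>The window decreases, so it lies below \<open>x\<close> iff its first entry does; and a first entry
  above \<open>x\<close> must be \<open>Max A\<close>, for otherwise it would start a 12 above \<open>x\<close> with \<open>Max A\<close>.\<close>
lemma decreasing_window_below_iff:
  assumes "\<tau> \<in> windowed_perms A 0 q (Suc x)" "finite A" "x \<notin> A" "1 \<le> q"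
  shows "(\<forall>y\<in>set (take q \<tau>). y < x) \<longleftrightarrow> hd \<tau> \<noteq> Max A \<or> (\<forall>a\<in>A. a < x)"
proof (cases "\<tau> = []")
  case True
  then show ?thesis using assms(1) unfolding windowed_perms_def by simp
next
  case False
  then obtain h \<tau>' where \<tau>: "\<tau> = h # \<tau>'" by (cases \<tau>) auto
  have set_\<tau>: "set \<tau> = A" and dec: "sorted_wrt (>) (take q \<tau>)"
    and no12: "\<not> has_12_from (singletons \<tau>) (Suc x)"
    using assms(1) unfolding windowed_perms_def avoids_123_12_from_def by auto
  have take_q: "take q \<tau> = h # take (q - 1) \<tau>'" using \<tau> assms(4) by (cases q) auto
  have h: "h \<in> A" "h \<noteq> x" using set_\<tau> \<tau> assms(3) by auto
  have below_h: "y \<le> h" if "y \<in> set (take q \<tau>)" for y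
    using dec that unfolding take_q by auto
  have h_below: "h < x" if "h \<noteq> Max A"
  proof (rule ccontr)
    assume "\<not> h < x"
    then have "Suc x \<le> h" using h(2) by simp
    moreover have "h < Max A" using h(1) that assms(2) by (simp add: le_neq_trans)
    moreover obtain k where k: "k < length \<tau>" "\<tau> ! k = Max A"
      using set_\<tau> Max_in[OF assms(2)] h(1) by (metis empty_iff in_set_conv_nth)
    moreover have "0 < k" using k \<tau> that by (cases k) auto
    ultimately have "has_12_from (singletons \<tau>) (Suc x)"
      using \<tau> by (intro has_12_fromI[where i = 0 and k = k and x = h and y = "Max A"]) auto
    with no12 show False ..
  qed
  show ?thesis
  proof
    assume all: "\<forall>y\<in>set (take q \<tau>). y < x"
    show "hd \<tau> \<noteq> Max A \<or> (\<forall>a\<in>A. a < x)"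
    proof (cases "hd \<tau> = Max A")
      case True
      then have "Max A < x" using all take_q \<tau> by simp
      then show ?thesis using Max_ge[OF assms(2)] le_less_trans by blast
    qed simp
  next
    assume "hd \<tau> \<noteq> Max A \<or> (\<forall>a\<in>A. a < x)"
    then show "\<forall>y\<in>set (take q \<tau>). y < x"
    proof
      assume "hd \<tau> \<noteq> Max A"
      then have "h < x" using h_below \<tau> by simp
      then show "\<forall>y\<in>set (take q \<tau>). y < x" using below_h by (meson le_less_trans)
    next
      assume "\<forall>a\<in>A. a < x"
      then show "\<forall>y\<in>set (take q \<tau>). y < x" using set_\<tau> by (meson in_set_takeD)
    qed
  qed
qed

lemma card_decreasing_window_below:
  assumes "finite A" "x \<notin> A" "\<exists>a\<in>A. x < a"
  shows "card {\<tau>\<in>windowed_perms A 0 (Suc q) (Suc x). \<forall>y\<in>set (take (Suc q) \<tau>). y < x} +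
           card (windowed_perms (A - {Max A}) 0 q (Suc x))
         = card (windowed_perms A 0 (Suc q) (Suc x))"
proof -
  define W where "W = windowed_perms A 0 (Suc q) (Suc x)"
  have "A \<noteq> {}" using assms(3) by auto
  then have M: "Max A \<in> A" "x < Max A" using assms(1,3) Max_ge by (auto intro: less_le_trans)
  have Nil: "[] \<notin> W" using \<open>A \<noteq> {}\<close> unfolding W_def windowed_perms_def by auto
  have "{\<tau>\<in>W. \<forall>y\<in>set (take (Suc q) \<tau>). y < x} = W - {\<tau>\<in>W. hd \<tau> = Max A}"
    using decreasing_window_below_iff[of _ A "Suc q" x] assms unfolding W_def
    by auto (meson less_asym)
  moreover have "card {\<tau>\<in>W. hd \<tau> = Max A} = card (windowed_perms (A - {Max A}) 0 q (Suc x))"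
  proof -
    have "num_above A (Max A) = 0" using num_above_eq_0_iff assms(1) M by auto
    moreover have "\<forall>y\<in>A - {Max A}. y < Max A" using assms(1) by (simp add: less_le)
    ultimately have "Cons (Max A) -` W = windowed_perms (A - {Max A}) 0 q (Suc x)"
      using M unfolding W_def vimage_Cons_windowed_perms_head[OF assms(1) M(1)]
      by (auto simp: windowed_perms_def dest: in_set_takeD)
    then show ?thesis using card_Cons_vimage_eq_hd[OF Nil] by metis
  qed
  moreover have "card W = card (W \<inter> {\<tau>\<in>W. hd \<tau> = Max A}) + card (W - {\<tau>\<in>W. hd \<tau> = Max A})"
    using finite_windowed_perms[OF assms(1)] unfolding W_def by (rule card_Int_Diff)
  moreover have "W \<inter> {\<tau>\<in>W. hd \<tau> = Max A} = {\<tau>\<in>W. hd \<tau> = Max A}" by auto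
  ultimately show ?thesis unfolding W_def[symmetric] by simp
qed

lemma card_windowed_perms_by_rank:
  assumes "finite A" "A \<noteq> {}"
    and "\<And>x. x \<in> A \<Longrightarrow> int (card (Cons x -` windowed_perms A j p t)) = f (num_above A x)"
  shows "int (card (windowed_perms A j p t)) = (\<Sum>r<card A. f r)"
proof -
  have "\<forall>\<tau>\<in>windowed_perms A j p t. \<tau> \<noteq> [] \<and> hd \<tau> \<in> A"
    using assms(2) unfolding windowed_perms_def by auto
  then have "card (windowed_perms A j p t) = (\<Sum>x\<in>A. card (Cons x -` windowed_perms A j p t))"
    by (rule card_by_head[OF assms(1) finite_windowed_perms[OF assms(1)]])
  then have "int (card (windowed_perms A j p t)) = (\<Sum>x\<in>A. f (num_above A x))"
    using assms(3) by simp
  then show ?thesis using sum_num_above[OF assms(1)] by simp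
qed

lemma card_vimage_Cons_windowed_perms_shift:
  assumes "finite A" "x \<in> A" "0 < j \<or> p = 0"
    and IH: "\<And>t'. int (card (windowed_perms (A - {x}) (j - 1) p t')) =
                   ballot (card A - 1) (num_atleast (A - {x}) t') p"
  shows "int (card (Cons x -` windowed_perms A j p t)) =
           (if num_above A x = 0 then ballot (card A - 1) (num_atleast A t - 1) p
            else if num_atleast A t \<le> num_above A x then ballot (card A - 1) (num_above A x) p
            else 0)"
proof (cases "t \<le> x \<longrightarrow> num_above A x = 0")
  case True
  then have "int (card (Cons x -` windowed_perms A j p t)) =
      ballot (card A - 1) (if num_above A x = 0 then num_atleast A t - 1 else num_above A x) p"
    using IH[of "min t (Suc x)"] vimage_Cons_windowed_perms_shift[OF assms(1-3)]
    unfolding num_atleast_Diff_min[OF assms(1,2) True] by simp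
  moreover have "num_above A x = 0 \<or> num_atleast A t \<le> num_above A x"
    using head_condition_iff[OF assms(1,2)] True by simp
  ultimately show ?thesis by auto
next
  case False
  then show ?thesis
    using head_condition_iff[OF assms(1,2)] vimage_Cons_windowed_perms_shift[OF assms(1-3)] by simp
qed

lemma card_vimage_Cons_windowed_perms_head:
  assumes "finite A" "x \<in> A"
    and IH1: "\<And>t'. int (card (windowed_perms (A - {x}) 0 (Suc q) t')) =
                    ballot (card A - 1) (num_atleast (A - {x}) t') (Suc q)"
    and IH2: "\<And>t'. int (card (windowed_perms (A - {x} - {Max (A - {x})}) 0 q t')) =
                    ballot (card A - 2) (num_atleast (A - {x} - {Max (A - {x})}) t') q"
  shows "int (card (Cons x -` windowed_perms A 0 (Suc (Suc q)) t)) =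
           (if num_above A x = 0 then ballot (card A - 1) (num_atleast A t - 1) (Suc q)
            else if num_atleast A t \<le> num_above A x
            then ballot (card A - 1) (num_above A x) (Suc q) -
                 ballot (card A - 2) (num_above A x - 1) q
            else 0)"
proof -
  define A' where "A' = A - {x}"
  define r where "r = num_above A x"
  have fin: "finite A'" "x \<notin> A'" unfolding A'_def using assms(1) by auto
  have vimage: "Cons x -` windowed_perms A 0 (Suc (Suc q)) t =
      (if t \<le> x \<longrightarrow> r = 0
       then {\<tau>\<in>windowed_perms A' 0 (Suc q) (min t (Suc x)). \<forall>y\<in>set (take (Suc q) \<tau>). y < x}
       else {})"
    unfolding A'_def r_def by (rule vimage_Cons_windowed_perms_head[OF assms(1,2)])
  consider "\<not> (t \<le> x \<longrightarrow> r = 0)" | "r = 0" | "x < t" "r \<noteq> 0" by linarith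
  then show ?thesis
  proof cases
    case 1
    then have "Cons x -` windowed_perms A 0 (Suc (Suc q)) t = {}" using vimage by simp
    moreover have "\<not> (r = 0 \<or> num_atleast A t \<le> r)"
      using head_condition_iff[OF assms(1,2)] 1 unfolding r_def by simp
    ultimately show ?thesis unfolding r_def[symmetric] by simp
  next
    case 2
    then have "\<forall>a\<in>A'. a < x"
      using num_above_eq_0_iff[OF assms(1)] unfolding A'_def r_def by fastforce
    then have "Cons x -` windowed_perms A 0 (Suc (Suc q)) t =
        windowed_perms A' 0 (Suc q) (min t (Suc x))"
      using vimage 2 by (auto simp: windowed_perms_def dest: in_set_takeD)
    moreover have "num_atleast A' (min t (Suc x)) = num_atleast A t - 1"
      using num_atleast_Diff_min[OF assms(1,2)] 2 unfolding A'_def r_def by simp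
    ultimately show ?thesis using IH1 2 unfolding A'_def[symmetric] r_def[symmetric] by simp
  next
    case 3
    have "\<not> (\<forall>b\<in>A. b \<le> x)" using num_above_eq_0_iff[OF assms(1), of x] 3(2) unfolding r_def by simp
    then obtain b where "b \<in> A" "x < b" by (auto simp: not_le)
    then have above: "\<exists>a\<in>A'. x < a" unfolding A'_def by blast
    have atleast: "num_atleast A' (Suc x) = r"
      using num_atleast_Diff_min[OF assms(1,2), of "Suc x"] 3(2) unfolding A'_def r_def by simp
    moreover have "num_atleast (A' - {Max A'}) (Suc x) = r - 1"
    proof -
      have "A' \<noteq> {}" "b \<le> Max A'" using \<open>b \<in> A\<close> \<open>x < b\<close> fin(1) unfolding A'_def by auto
      then show ?thesis using num_atleast_Diff_Max[OF fin(1)] atleast \<open>x < b\<close> by simp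
    qed
    ultimately have "int (card (Cons x -` windowed_perms A 0 (Suc (Suc q)) t)) =
        ballot (card A - 1) r (Suc q) - ballot (card A - 2) (r - 1) q"
      using vimage 3 card_decreasing_window_below[OF fin above, of q]
        IH1[of "Suc x"] IH2[of "Suc x"]
      unfolding A'_def[symmetric] by (simp add: algebra_simps)
    moreover have "num_atleast A t \<le> r"
      using head_condition_iff[OF assms(1,2), of t] 3 unfolding r_def by simp
    ultimately show ?thesis using 3(2) unfolding r_def[symmetric] by simp
  qed
qed

lemma card_windowed_perms_step_shift:
  assumes "finite A" "card A = Suc M" "0 < j \<or> p = 0" "j + p \<le> Suc M"
    and IH: "\<And>B j' p' t'. B \<subset> A \<Longrightarrow> j' + p' \<le> card B \<Longrightarrow>
               int (card (windowed_perms B j' p' t')) = ballot (card B) (num_atleast B t') p'"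
  shows "int (card (windowed_perms A j p t)) = ballot (Suc M) (num_atleast A t) p"
proof -
  have "int (card (windowed_perms A j p t)) =
      (\<Sum>r<card A. if r = 0 then ballot M (num_atleast A t - 1) p
                  else if num_atleast A t \<le> r then ballot M r p else 0)"
  proof (rule card_windowed_perms_by_rank[OF assms(1)])
    show "A \<noteq> {}" using assms(2) by auto
    fix x assume x: "x \<in> A"
    have "j - 1 + p \<le> card (A - {x})" using assms(1-4) x by auto
    then have "int (card (windowed_perms (A - {x}) (j - 1) p t')) =
        ballot (card A - 1) (num_atleast (A - {x}) t') p" for t'
      using IH[of "A - {x}"] x assms(1) by auto
    then show "int (card (Cons x -` windowed_perms A j p t)) =
        (if num_above A x = 0 then ballot M (num_atleast A t - 1) p
         else if num_atleast A t \<le> num_above A x then ballot M (num_above A x) p else 0)"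
      using card_vimage_Cons_windowed_perms_shift[OF assms(1) x assms(3)] assms(2) by simp
  qed
  also have "\<dots> = ballot M (num_atleast A t - 1) p + (\<Sum>r\<in>{max (num_atleast A t) 1..M}. ballot M r p)"
    unfolding assms(2) by (rule sum_lessThan_Suc_zero_or_ge)
  also have "\<dots> = ballot (Suc M) (num_atleast A t) p"
    using ballot_first_step num_atleast_le_card[OF assms(1)] assms(2-4) by auto
  finally show ?thesis .
qed

lemma card_windowed_perms_step_window:
  assumes "finite A" "card A = Suc (Suc K)" "q \<le> K"
    and IH: "\<And>B j' p' t'. B \<subset> A \<Longrightarrow> j' + p' \<le> card B \<Longrightarrow>
               int (card (windowed_perms B j' p' t')) = ballot (card B) (num_atleast B t') p'"
  shows "int (card (windowed_perms A 0 (Suc (Suc q)) t)) =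
           ballot (Suc (Suc K)) (num_atleast A t) (Suc (Suc q))"
proof -
  have "int (card (windowed_perms A 0 (Suc (Suc q)) t)) =
      (\<Sum>r<card A. if r = 0 then ballot (Suc K) (num_atleast A t - 1) (Suc q)
                  else if num_atleast A t \<le> r then ballot (Suc K) r (Suc q) - ballot K (r - 1) q
                  else 0)"
  proof (rule card_windowed_perms_by_rank[OF assms(1)])
    show "A \<noteq> {}" using assms(2) by auto
    fix x assume x: "x \<in> A"
    define A' where "A' = A - {x}"
    have A': "finite A'" "card A' = Suc K" "A' \<subset> A" using assms(1,2) x unfolding A'_def by auto
    then have "A' \<noteq> {}" by auto
    then have "card (A' - {Max A'}) = K" "A' - {Max A'} \<subset> A" using A' by auto
    then have "int (card (windowed_perms A' 0 (Suc q) t')) =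
        ballot (card A - 1) (num_atleast A' t') (Suc q)"
      "int (card (windowed_perms (A' - {Max A'}) 0 q t')) =
         ballot (card A - 2) (num_atleast (A' - {Max A'}) t') q" for t'
      using IH[of A' 0 "Suc q"] IH[of "A' - {Max A'}" 0 q] A' assms(2,3) by auto
    then show "int (card (Cons x -` windowed_perms A 0 (Suc (Suc q)) t)) =
        (if num_above A x = 0 then ballot (Suc K) (num_atleast A t - 1) (Suc q)
         else if num_atleast A t \<le> num_above A x
         then ballot (Suc K) (num_above A x) (Suc q) - ballot K (num_above A x - 1) q else 0)"
      using card_vimage_Cons_windowed_perms_head[OF assms(1) x] assms(2) unfolding A'_def by simp
  qed
  also have "\<dots> = ballot (Suc K) (num_atleast A t - 1) (Suc q) +
      (\<Sum>r\<in>{max (num_atleast A t) 1..Suc K}. ballot (Suc K) r (Suc q) - ballot K (r - 1) q)"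
    unfolding assms(2) by (rule sum_lessThan_Suc_zero_or_ge)
  also have "\<dots> = ballot (Suc (Suc K)) (num_atleast A t) (Suc (Suc q))"
    using ballot_first_step_window num_atleast_le_card[OF assms(1)] assms(2,3) by simp
  finally show ?thesis .
qed

theorem card_windowed_perms:
  assumes "finite A" "j + p \<le> card A"
  shows "int (card (windowed_perms A j p t)) = ballot (card A) (num_atleast A t) p"
  using assms
proof (induction "card A" arbitrary: A j p t rule: less_induct)
  case less
  have IH: "int (card (windowed_perms B j' p' t')) = ballot (card B) (num_atleast B t') p'"
    if "B \<subset> A" "j' + p' \<le> card B" for B j' p' t'
    using less.hyps[of B] less.prems(1) that
    by (meson finite_subset psubset_card_mono psubset_imp_subset)
  consider "A = {}" | M where "card A = Suc M" "0 < j \<or> p = 0"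
    | M where "card A = Suc M" "j = 0" "p = 1"
    | K q where "card A = Suc (Suc K)" "q \<le> K" "j = 0" "p = Suc (Suc q)"
  proof (cases "A = {}")
    case False
    then obtain M where M: "card A = Suc M"
      using less.prems(1) by (metis card_gt_0_iff gr0_implies_Suc)
    show thesis
    proof (cases "0 < j \<or> p = 0")
      case False
      then obtain q where "j = 0" "p = Suc q" using not0_implies_Suc by blast
      then show thesis using that(3,4) M less.prems(2) by (cases q; cases M) auto
    qed (use that(2) M in blast)
  qed (use that(1) in blast)
  then show ?case
  proof cases
    case 1
    then have "windowed_perms A j p t = {[]}"
      unfolding windowed_perms_def by (auto simp: avoids_123_12_from_Nil)
    then show ?thesis using 1 less.prems by (simp add: ballot_def num_atleast_def)
  next
    case (2 M)
    then show ?thesis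
      using card_windowed_perms_step_shift[OF less.prems(1) 2(1) 2(2) _ IH] less.prems by simp
  next
    case (3 M)
    have "windowed_perms A 0 1 t = windowed_perms A 0 0 t"
      unfolding windowed_perms_def by (auto simp: sorted_wrt01)
    then show ?thesis
      using 3 card_windowed_perms_step_shift[OF less.prems(1) 3(1) _ _ IH, of 0 0]
        ballot_window_0_eq_1[OF num_atleast_le_card[OF less.prems(1)]]
      by simp
  next
    case (4 K q)
    then show ?thesis using card_windowed_perms_step_window[OF less.prems(1) 4(1,2) IH] by simp
  qed
qed

section \<open>Partitions with one large block\<close>

lemma disjoint_family_on_nth_Cons:
  "disjoint_family_on (nth (B # Bs)) {..<length (B # Bs)} \<longleftrightarrow>
     B \<inter> \<Union>(set Bs) = {} \<and> disjoint_family_on (nth Bs) {..<length Bs}"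
proof -
  have "disjoint_family_on (nth (B # Bs)) {..<length (B # Bs)} \<longleftrightarrow>
        (\<forall>k<length Bs. B \<inter> Bs ! k = {}) \<and> disjoint_family_on (nth Bs) {..<length Bs}"
    unfolding disjoint_family_on_def length_Cons lessThan_Suc_eq_insert_0
    by (simp add: Int_commute) blast
  also have "(\<forall>k<length Bs. B \<inter> Bs ! k = {}) \<longleftrightarrow> (\<forall>C\<in>set Bs. B \<inter> C = {})"
    by (simp add: all_set_conv_all_nth)
  also have "\<dots> \<longleftrightarrow> B \<inter> \<Union>(set Bs) = {}" by blast
  finally show ?thesis .
qed

lemma ordered_set_partition_iff_disjoint_family:
  "ordered_set_partition n Bs \<longleftrightarrow>
     {} \<notin> set Bs \<and> disjoint_family_on (nth Bs) {..<length Bs} \<and> \<Union>(set Bs) = {1..n}"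
  unfolding ordered_set_partition_def disjoint_family_on_def by (auto simp: in_set_conv_nth)

lemma disjoint_family_on_nth_singletons_append:
  "disjoint_family_on (nth (singletons L @ Bs)) {..<length (singletons L @ Bs)} \<longleftrightarrow>
     distinct L \<and> set L \<inter> \<Union>(set Bs) = {} \<and> disjoint_family_on (nth Bs) {..<length Bs}"
proof (induction L)
  case (Cons a L)
  have "\<Union>(set (singletons L @ Bs)) = set L \<union> \<Union>(set Bs)" by auto
  then show ?case
    unfolding list.map(2) append_Cons disjoint_family_on_nth_Cons Cons.IH by auto
qed simp

lemma ordered_set_partition_block_iff:
  assumes "distinct D" "D \<noteq> []"
  shows "ordered_set_partition n (singletons L @ set D # singletons R) \<longleftrightarrow>
           distinct (L @ D @ R) \<and> set (L @ D @ R) = {1..n}"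
proof -
  have "disjoint_family_on (nth (singletons R)) {..<length (singletons R)} \<longleftrightarrow> distinct R"
    using disjoint_family_on_nth_singletons_append[of R "[]"] by (simp add: disjoint_family_on_def)
  then show ?thesis
    using assms unfolding ordered_set_partition_iff_disjoint_family
      disjoint_family_on_nth_singletons_append disjoint_family_on_nth_Cons
    by auto
qed

lemma singletons_around_nth:
  assumes "j < length Bs" "\<forall>i<length Bs. i \<noteq> j \<longrightarrow> card (Bs ! i) = 1"
  shows "Bs = singletons (map the_elem (take j Bs)) @ Bs ! j #
                singletons (map the_elem (drop (Suc j) Bs))"
proof -
  have singletons_the_elem: "singletons (map the_elem Cs) = Cs" if "\<forall>C\<in>set Cs. card C = 1" for Cs
    using that by (induction Cs) (auto simp: card_1_singleton_iff)
  have "\<forall>C\<in>set (take j Bs). card C = 1" "\<forall>C\<in>set (drop (Suc j) Bs). card C = 1"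
    using assms by (auto simp: in_set_conv_nth)
  then show ?thesis using id_take_nth_drop[OF assms(1)] singletons_the_elem by simp
qed

lemma sorted_wrt_greater_set_unique:
  fixes xs ys :: "'a::linorder list"
  assumes "sorted_wrt (>) xs" "sorted_wrt (>) ys" "set xs = set ys"
  shows "xs = ys"
  using strict_sorted_equal[of "rev ys" "rev xs"] assms by (simp add: sorted_wrt_rev)

definition window_partition :: "nat list \<Rightarrow> nat \<Rightarrow> nat \<Rightarrow> nat set list" where
  "window_partition \<tau> j p =
     singletons (take j \<tau>) @ set (take p (drop j \<tau>)) # singletons (drop (j + p) \<tau>)"

definition avoiding_one_block_partitions :: "nat \<Rightarrow> nat \<Rightarrow> (nat set list \<times> nat) set" where
  "avoiding_one_block_partitions n p =
     {(Bs, j). ordered_set_partition n Bs \<and> length Bs = n - p + 1 \<and>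
               j < length Bs \<and> card (Bs ! j) = p \<and>
               (\<forall>i < length Bs. i \<noteq> j \<longrightarrow> card (Bs ! i) = 1) \<and> avoids_123 Bs}"

lemma take_drop_split3: "take j xs @ take p (drop j xs) @ drop (j + p) xs = xs"
  by (metis append_take_drop_id add.commute drop_drop)

lemma avoids_123_iff_avoids_123_12_from:
  "\<Union>(set Bs) = {1..n} \<Longrightarrow> avoids_123 Bs \<longleftrightarrow> avoids_123_12_from Bs (Suc n)"
  unfolding avoids_123_def avoids_123_12_from_def using not_has_12_from_above[of Bs n] by auto

lemma window_partition_mem:
  assumes "\<tau> \<in> windowed_perms {1..n} j p (Suc n)" "1 \<le> p" "j + p \<le> n"
  shows "(window_partition \<tau> j p, j) \<in> avoiding_one_block_partitions n p"
proof -
  define L D R where "L = take j \<tau>" and "D = take p (drop j \<tau>)" and "R = drop (j + p) \<tau>"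
  have perm: "distinct (L @ D @ R)" "set (L @ D @ R) = {1..n}"
    and avoid: "avoids_123_12_from (singletons (L @ D @ R)) (Suc n)" and dec: "sorted_wrt (>) D"
    using assms(1) unfolding windowed_perms_def L_def D_def R_def take_drop_split3 by auto
  have len: "length L = j" "length D = p" "length R = n - j - p"
    using distinct_card[OF perm(1)] perm(2) assms(3) unfolding L_def D_def R_def by auto
  then have D: "distinct D" "D \<noteq> []" using perm(1) assms(2) by auto
  have Bs: "window_partition \<tau> j p = singletons L @ set D # singletons R"
    unfolding window_partition_def L_def D_def R_def ..
  have "card (window_partition \<tau> j p ! i) = 1"
    if "i < length (window_partition \<tau> j p)" "i \<noteq> j" for i
    using that len unfolding Bs by (auto simp: nth_append nth_Cons' split: if_splits)
  moreover have "card (window_partition \<tau> j p ! j) = p"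
    using len distinct_card[OF D(1)] unfolding Bs by (simp add: nth_append)
  moreover have "ordered_set_partition n (window_partition \<tau> j p)"
    using ordered_set_partition_block_iff[OF D] perm unfolding Bs by blast
  moreover have "avoids_123 (window_partition \<tau> j p)"
  proof -
    have "\<Union>(set (window_partition \<tau> j p)) = {1..n}" using perm(2) unfolding Bs by auto
    then have "avoids_123 (window_partition \<tau> j p) \<longleftrightarrow>
        avoids_123_12_from (window_partition \<tau> j p) (Suc n)"
      by (rule avoids_123_iff_avoids_123_12_from)
    then show ?thesis
      using avoid avoids_123_12_from_block_iff_singletons[OF dec D(2)] unfolding Bs by simp
  qed
  ultimately show ?thesis
    unfolding avoiding_one_block_partitions_def using len assms unfolding Bs by auto
qed

lemma window_partition_surj:
  assumes "(Bs, j) \<in> avoiding_one_block_partitions n p" "1 \<le> p"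
  obtains \<tau> where "\<tau> \<in> windowed_perms {1..n} j p (Suc n)" "j + p \<le> n" "window_partition \<tau> j p = Bs"
proof -
  have osp: "ordered_set_partition n Bs" and j: "j < length Bs" and S: "card (Bs ! j) = p"
    and others: "\<forall>i<length Bs. i \<noteq> j \<longrightarrow> card (Bs ! i) = 1" and avoid: "avoids_123 Bs"
    using assms(1) unfolding avoiding_one_block_partitions_def by auto
  define L R where "L = map the_elem (take j Bs)" and "R = map the_elem (drop (Suc j) Bs)"
  define D where "D = rev (sorted_list_of_set (Bs ! j))"
  have "finite (Bs ! j)" using S assms(2) card.infinite by fastforce
  then have D: "set D = Bs ! j" "sorted_wrt (>) D" "distinct D" "length D = p"
    using S unfolding D_def by (auto simp: sorted_wrt_rev)
  then have "D \<noteq> []" using assms(2) by auto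
  have Bs: "Bs = singletons L @ set D # singletons R"
    unfolding L_def R_def D(1) using singletons_around_nth[OF j others] .
  have L: "length L = j" unfolding L_def using j by simp
  define \<tau> where "\<tau> = L @ D @ R"
  have "ordered_set_partition n (singletons L @ set D # singletons R)" using osp Bs by simp
  then have perm: "distinct \<tau>" "set \<tau> = {1..n}"
    unfolding \<tau>_def ordered_set_partition_block_iff[OF D(3) \<open>D \<noteq> []\<close>] by simp_all
  have parts: "take j \<tau> = L" "take p (drop j \<tau>) = D" "drop (j + p) \<tau> = R"
    unfolding \<tau>_def using L D(4) by auto
  have "\<Union>(set Bs) = {1..n}" using osp by (simp add: ordered_set_partition_def)
  then have "avoids_123_12_from Bs (Suc n)" using avoid avoids_123_iff_avoids_123_12_from by blast
  then have "avoids_123_12_from (singletons \<tau>) (Suc n)"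
    using avoids_123_12_from_block_iff_singletons[OF D(2) \<open>D \<noteq> []\<close>] Bs unfolding \<tau>_def by simp
  then have "\<tau> \<in> windowed_perms {1..n} j p (Suc n)"
    unfolding windowed_perms_def using perm parts D(2) by simp
  moreover have "j + p \<le> n"
    using distinct_card[OF perm(1)] perm(2) L D(4) unfolding \<tau>_def by simp
  moreover have "window_partition \<tau> j p = Bs"
    using Bs by (simp add: window_partition_def parts)
  ultimately show ?thesis by (rule that)
qed

lemma window_partition_inj:
  assumes "sorted_wrt (>) (take p (drop j \<tau>))" "sorted_wrt (>) (take p (drop j \<tau>'))"
    and "j \<le> length \<tau>" "j \<le> length \<tau>'" "window_partition \<tau> j p = window_partition \<tau>' j p"
  shows "\<tau> = \<tau>'"
proof -
  have "singletons (take j \<tau>) = singletons (take j \<tau>') \<and>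
        set (take p (drop j \<tau>)) # singletons (drop (j + p) \<tau>) =
        set (take p (drop j \<tau>')) # singletons (drop (j + p) \<tau>')"
    using assms(5) append_eq_append_conv[of "singletons (take j \<tau>)" "singletons (take j \<tau>')"]
      assms(3,4)
    unfolding window_partition_def by simp
  moreover have "inj (\<lambda>x::nat. {x})" by (simp add: inj_def)
  ultimately have "take j \<tau> = take j \<tau>'" "drop (j + p) \<tau> = drop (j + p) \<tau>'"
    "set (take p (drop j \<tau>)) = set (take p (drop j \<tau>'))"
    by (simp_all add: inj_map_eq_map)
  moreover have "take p (drop j \<tau>) = take p (drop j \<tau>')"
    using sorted_wrt_greater_set_unique[OF assms(1,2)] calculation(3) .
  ultimately have "take j \<tau> @ take p (drop j \<tau>) @ drop (j + p) \<tau> =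
      take j \<tau>' @ take p (drop j \<tau>') @ drop (j + p) \<tau>'" by (simp only:)
  then show ?thesis by (simp only: take_drop_split3)
qed

lemma bij_betw_window_partition:
  assumes "1 \<le> p" "p \<le> n"
  shows "bij_betw (\<lambda>(j, \<tau>). (window_partition \<tau> j p, j))
           (SIGMA j:{..n - p}. windowed_perms {1..n} j p (Suc n))
           (avoiding_one_block_partitions n p)"
    (is "bij_betw ?f ?S _")
  unfolding bij_betw_def
proof
  show "inj_on ?f ?S"
  proof (rule inj_onI)
    fix x y assume "x \<in> ?S" "y \<in> ?S" "?f x = ?f y"
    then obtain j \<tau> \<tau>' where xy: "x = (j, \<tau>)" "y = (j, \<tau>')" "j \<le> n - p"
      and \<tau>: "\<tau> \<in> windowed_perms {1..n} j p (Suc n)" "\<tau>' \<in> windowed_perms {1..n} j p (Suc n)"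
      and eq: "window_partition \<tau> j p = window_partition \<tau>' j p"
      by auto
    have "length \<tau> = n" "length \<tau>' = n" using \<tau> length_windowed_perms by fastforce+
    then have "\<tau> = \<tau>'"
      using window_partition_inj[OF _ _ _ _ eq] \<tau> xy(3) by (auto simp: windowed_perms_def)
    then show "x = y" using xy by simp
  qed
  show "?f ` ?S = avoiding_one_block_partitions n p"
  proof (intro equalityI subsetI)
    fix y assume "y \<in> ?f ` ?S"
    then obtain j \<tau> where "j \<le> n - p" "\<tau> \<in> windowed_perms {1..n} j p (Suc n)"
      "y = (window_partition \<tau> j p, j)"
      by auto
    then show "y \<in> avoiding_one_block_partitions n p" using window_partition_mem assms by simp
  next
    fix y assume "y \<in> avoiding_one_block_partitions n p"
    then obtain Bs j where y: "y = (Bs, j)" "(Bs, j) \<in> avoiding_one_block_partitions n p"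
      by (cases y) auto
    then obtain \<tau> where "\<tau> \<in> windowed_perms {1..n} j p (Suc n)" "j + p \<le> n"
      "window_partition \<tau> j p = Bs"
      using window_partition_surj assms(1) by metis
    then show "y \<in> ?f ` ?S" using y by (auto intro!: image_eqI[where x = "(j, \<tau>)"])
  qed
qed

lemma ballot_0_closed_form:
  assumes "p \<le> n"
  shows "real_of_int (ballot n 0 p) =
           real (p + 1) * real ((2 * n - p) choose (n - p)) / real (n + 1)"
proof -
  define m where "m = 2 * n - p"
  have mn: "m - n = n - p" "n \<le> m" unfolding m_def using assms by auto
  have "(n + 1) * (m choose (n + 1)) = (n - p) * (m choose n)"
    using binomial_absorption[of n m] binomial_absorb_comp[of m n] mn by simp
  then have "real (n + 1) * real (m choose (n + 1)) = (real n - real p) * real (m choose n)"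
    using assms by (metis of_nat_diff of_nat_mult)
  then have "real (m choose n) - real (m choose (n + 1)) =
      real (p + 1) * real (m choose n) / real (n + 1)"
    by (simp add: field_simps)
  moreover have "m choose n = m choose (n - p)"
    using binomial_symmetric[OF mn(2)] mn(1) by simp
  ultimately show ?thesis unfolding ballot_def m_def[symmetric] by simp
qed

theorem theorem6:
  fixes n p :: nat
  assumes "1 \<le> p" and "p < n"
  shows "real (card {(Bs, j). ordered_set_partition n Bs \<and> length Bs = n - p + 1 \<and>
              j < length Bs \<and> card (Bs ! j) = p \<and>
              (\<forall>i < length Bs. i \<noteq> j \<longrightarrow> card (Bs ! i) = 1) \<and>
              avoids_123 Bs})
         = real (n - p + 1) * real (p + 1) * real ((2 * n - p) choose (n - p)) / real (n + 1)"
proof -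
  have none: "{a\<in>{1..n}. Suc n \<le> a} = {}" by auto
  have "num_atleast {1..n} (Suc n) = 0" unfolding num_atleast_def none by simp
  then have count: "int (card (windowed_perms {1..n} j p (Suc n))) = ballot n 0 p"
    if "j \<le> n - p" for j
    using card_windowed_perms[of "{1..n}" j p "Suc n"] that assms by simp
  have "card (avoiding_one_block_partitions n p) =
        card (SIGMA j:{..n - p}. windowed_perms {1..n} j p (Suc n))"
    using bij_betw_same_card[OF bij_betw_window_partition] assms by simp
  also have "\<dots> = (\<Sum>j\<le>n - p. card (windowed_perms {1..n} j p (Suc n)))"
    by (intro card_SigmaI) (simp_all add: finite_windowed_perms)
  finally have "int (card (avoiding_one_block_partitions n p)) =
      (\<Sum>j\<le>n - p. int (card (windowed_perms {1..n} j p (Suc n))))" by simp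
  also have "\<dots> = int (n - p + 1) * ballot n 0 p"
    using count by simp
  finally have "real (card (avoiding_one_block_partitions n p)) =
      real (n - p + 1) * real_of_int (ballot n 0 p)"
    by (metis of_int_mult of_int_of_nat_eq)
  then show ?thesis
    using ballot_0_closed_form[of p n] assms unfolding avoiding_one_block_partitions_def by simp
qed

end
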